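(* For all $\boldsymbol\mu,\boldsymbol\mu'\in\mathcal P(\mathcal X\times[K])$ and every collection $\boldsymbol\pi=(\pi_k)_{k\in[K]}$ of decision rules $\pi_k:\mathcal X\times\mathcal P(\mathcal X\times[K])\to\mathcal P(\mathcal U)$ with $|\pi_k(x,\boldsymbol\mu_1)-\pi_k(x,\boldsymbol\mu_2)|_1\le L_Q|\boldsymbol\mu_1-\boldsymbol\mu_2|_1$ for all $x,k,\boldsymbol\mu_1,\boldsymbol\mu_2$, $$|P^{\mathrm{MF}}(\boldsymbol\mu,\boldsymbol\pi)-P^{\mathrm{MF}}(\boldsymbol\mu',\boldsymbol\pi)|_1\le S_P|\boldsymbol\mu-\boldsymbol\mu'|_1,\qquad S_P=(1+L_Q)+L_P(2+L_Q).$$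
   Context: $K\ge1$, $[K]=\{1,\dots,K\}$, $\mathcal X,\mathcal U$ finite, $\mathcal P(A)$ probability distributions on $A$, $|\cdot|_1$ the $L_1$ norm, $L_P,L_Q>0$. For each $k$, $P_k:\mathcal X\times\mathcal U\times\mathcal P(\mathcal X\times[K])\times\mathcal P(\mathcal U\times[K])\to\mathcal P(\mathcal X)$ satisfies $|P_k(x,u,\boldsymbol\mu_1,\boldsymbol\nu_1)-P_k(x,u,\boldsymbol\mu_2,\boldsymbol\nu_2)|_1\le L_P(|\boldsymbol\mu_1-\boldsymbol\mu_2|_1+|\boldsymbol\nu_1-\boldsymbol\nu_2|_1)$. Define $\nu^{\mathrm{MF}}(\boldsymbol\mu,\boldsymbol\pi)(u,k)=\sum_x\pi_k(x,\boldsymbol\mu)(u)\boldsymbol\mu(x,k)$ and $P^{\mathrm{MF}}(\boldsymbol\mu,\boldsymbol\pi)\in\mathcal P(\mathcal X\times[K])$ by $P^{\mathrm{MF}}(\boldsymbol\mu,\boldsymbol\pi)(x',k)=\sum_{x\in\mathcal X}\sum_{u\in\mathcal U}\boldsymbol\mu(x,k)\pi_k(x,\boldsymbol\mu)(u)P_k(x,u,\boldsymbol\mu,\nu^{\mathrm{MF}}(\boldsymbol\mu,\boldsymbol\pi))(x')$. *)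

theory Defs
  imports Complex_Main
begin

definition is_dist :: "'a set \<Rightarrow> ('a \<Rightarrow> real) \<Rightarrow> bool" where
  "is_dist A p \<longleftrightarrow> (\<forall>a. 0 \<le> p a) \<and> (\<forall>a. a \<notin> A \<longrightarrow> p a = 0) \<and> sum p A = 1"

definition l1 :: "'a set \<Rightarrow> ('a \<Rightarrow> real) \<Rightarrow> ('a \<Rightarrow> real) \<Rightarrow> real" where
  "l1 A p q = (\<Sum>a\<in>A. \<bar>p a - q a\<bar>)"

abbreviation idx :: "nat \<Rightarrow> nat set" where
  "idx K \<equiv> {1..K}"

definition nu_MF :: "('x::finite \<times> nat \<Rightarrow> real) \<Rightarrow> (nat \<Rightarrow> 'x \<Rightarrow> ('x \<times> nat \<Rightarrow> real) \<Rightarrow> 'u \<Rightarrow> real)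
    \<Rightarrow> ('u \<times> nat \<Rightarrow> real)" where
  "nu_MF mu pol = (\<lambda>(u, k). \<Sum>x\<in>UNIV. pol k x mu u * mu (x, k))"

definition P_MF :: "(nat \<Rightarrow> 'x \<Rightarrow> 'u \<Rightarrow> ('x \<times> nat \<Rightarrow> real) \<Rightarrow> ('u \<times> nat \<Rightarrow> real) \<Rightarrow> 'x \<Rightarrow> real)
    \<Rightarrow> ('x::finite \<times> nat \<Rightarrow> real) \<Rightarrow> (nat \<Rightarrow> 'x \<Rightarrow> ('x \<times> nat \<Rightarrow> real) \<Rightarrow> 'u::finite \<Rightarrow> real)
    \<Rightarrow> ('x \<times> nat \<Rightarrow> real)" where
  "P_MF P mu pol = (\<lambda>(x', k). \<Sum>x\<in>UNIV. \<Sum>u\<in>UNIV.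
      mu (x, k) * pol k x mu u * P k x u mu (nu_MF mu pol) x')"

end

theory Submission
  imports Defs
begin

text \<open>Both \<open>\<nu>\<^sup>MF(\<mu>, \<pi>)\<close> and \<open>P\<^sup>MF(\<mu>, \<pi>)\<close> are marginals of joint laws built by
  successively mixing kernels into \<open>\<mu>\<close>: the state-action law \<open>\<mu>(x,k) \<pi>\<^sub>k(x,\<mu>)(u)\<close>, and
  that law followed by the transition kernel. Marginalising does not increase the
  \<open>L\<^sub>1\<close> distance, and mixing a kernel into a distribution increases it by at most the
  worst-case distance of the kernels. Hence
  \<open>|\<nu> - \<nu>'| \<le> |\<mu> - \<mu>'| + L\<^sub>Q |\<mu> - \<mu>'|\<close> and
  \<open>|P\<^sup>MF(\<mu>) - P\<^sup>MF(\<mu>')| \<le> (1 + L\<^sub>Q) |\<mu> - \<mu>'| + L\<^sub>P (|\<mu> - \<mu>'| + |\<nu> - \<nu>'|)\<close>.\<close>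

lemma abs_mult_diff_mult_le:
  fixes a b p q :: real
  assumes "0 \<le> p" "0 \<le> b"
  shows "\<bar>a * p - b * q\<bar> \<le> \<bar>a - b\<bar> * p + b * \<bar>p - q\<bar>"
proof -
  have "a * p - b * q = (a - b) * p + b * (p - q)"
    by (simp add: algebra_simps)
  also have "\<bar>\<dots>\<bar> \<le> \<bar>a - b\<bar> * p + b * \<bar>p - q\<bar>"
    using assms by (metis abs_mult abs_of_nonneg abs_triangle_ineq)
  finally show ?thesis .
qed

lemma is_dist_mixture:
  assumes b: "is_dist A b" and q: "\<And>i. i \<in> A \<Longrightarrow> is_dist B (q i)"
  shows "is_dist (A \<times> B) (\<lambda>(i, j). b i * q i j)"
proof -
  have "sum (\<lambda>(i, j). b i * q i j) (A \<times> B) = (\<Sum>i\<in>A. b i * sum (q i) B)"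
    by (simp add: sum.cartesian_product [symmetric] sum_distrib_left)
  also have "\<dots> = 1"
    using b q by (simp add: is_dist_def)
  finally have "sum (\<lambda>(i, j). b i * q i j) (A \<times> B) = 1" .
  moreover have "0 \<le> b i * q i j" for i j
    using b q by (cases "i \<in> A") (auto simp: is_dist_def)
  moreover have "b i * q i j = 0" if "(i, j) \<notin> A \<times> B" for i j
    using b q that by (cases "i \<in> A") (auto simp: is_dist_def)
  ultimately show ?thesis
    by (auto simp: is_dist_def)
qed

lemma l1_mixture_le:
  assumes b: "is_dist A b" and p: "\<And>i. i \<in> A \<Longrightarrow> is_dist B (p i)"
    and pq: "\<And>i. i \<in> A \<Longrightarrow> l1 B (p i) (q i) \<le> c"
  shows "l1 (A \<times> B) (\<lambda>(i, j). a i * p i j) (\<lambda>(i, j). b i * q i j) \<le> l1 A a b + c"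
proof -
  have "l1 (A \<times> B) (\<lambda>(i, j). a i * p i j) (\<lambda>(i, j). b i * q i j)
      = (\<Sum>i\<in>A. \<Sum>j\<in>B. \<bar>a i * p i j - b i * q i j\<bar>)"
    by (simp add: l1_def sum.cartesian_product')
  also have "\<dots> \<le> (\<Sum>i\<in>A. \<bar>a i - b i\<bar> * sum (p i) B + b i * l1 B (p i) (q i))"
  proof (rule sum_mono)
    fix i assume "i \<in> A"
    then have "0 \<le> b i" "\<And>j. 0 \<le> p i j"
      using b p by (auto simp: is_dist_def)
    then have "(\<Sum>j\<in>B. \<bar>a i * p i j - b i * q i j\<bar>)
        \<le> (\<Sum>j\<in>B. \<bar>a i - b i\<bar> * p i j + b i * \<bar>p i j - q i j\<bar>)"
      by (intro sum_mono abs_mult_diff_mult_le)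
    then show "(\<Sum>j\<in>B. \<bar>a i * p i j - b i * q i j\<bar>)
        \<le> \<bar>a i - b i\<bar> * sum (p i) B + b i * l1 B (p i) (q i)"
      by (simp add: l1_def sum.distrib sum_distrib_left)
  qed
  also have "\<dots> \<le> (\<Sum>i\<in>A. \<bar>a i - b i\<bar> + b i * c)"
    using b p pq unfolding is_dist_def by (intro sum_mono) (simp add: mult_left_mono)
  also have "\<dots> = l1 A a b + c"
    using b by (simp add: l1_def is_dist_def sum.distrib sum_distrib_right [symmetric])
  finally show ?thesis .
qed

definition state_action ::
    "('x \<times> nat \<Rightarrow> real) \<Rightarrow> (nat \<Rightarrow> 'x \<Rightarrow> ('x \<times> nat \<Rightarrow> real) \<Rightarrow> 'u \<Rightarrow> real) \<Rightarrow> ('x \<times> nat) \<times> 'u \<Rightarrow> real"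
  where "state_action mu pol = (\<lambda>(s, u). mu s * pol (snd s) (fst s) mu u)"

definition transition_kernel ::
    "(nat \<Rightarrow> 'x \<Rightarrow> 'u \<Rightarrow> ('x \<times> nat \<Rightarrow> real) \<Rightarrow> ('u \<times> nat \<Rightarrow> real) \<Rightarrow> 'x \<Rightarrow> real)
      \<Rightarrow> ('x::finite \<times> nat \<Rightarrow> real) \<Rightarrow> (nat \<Rightarrow> 'x \<Rightarrow> ('x \<times> nat \<Rightarrow> real) \<Rightarrow> 'u \<Rightarrow> real)
      \<Rightarrow> ('x \<times> nat) \<times> 'u \<Rightarrow> 'x \<Rightarrow> real"
  where "transition_kernel P mu pol = (\<lambda>(s, u). P (snd s) (fst s) u mu (nu_MF mu pol))"

lemma nu_MF_eq_marginal: "nu_MF mu pol = (\<lambda>(u, k). \<Sum>x\<in>UNIV. state_action mu pol ((x, k), u))"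
  by (simp add: nu_MF_def state_action_def mult.commute)

lemma P_MF_eq_marginal:
  "P_MF P mu pol = (\<lambda>(x', k).
    \<Sum>x\<in>UNIV. \<Sum>u\<in>UNIV. state_action mu pol ((x, k), u) * transition_kernel P mu pol ((x, k), u) x')"
  by (simp add: P_MF_def state_action_def transition_kernel_def)

lemma sum_marginal_state:
  "(\<Sum>(u, k)\<in>UNIV \<times> I. \<Sum>x\<in>UNIV. f ((x, k), u)) = sum f ((UNIV \<times> I) \<times> UNIV)"
proof -
  have "(\<Sum>(u, k)\<in>UNIV \<times> I. \<Sum>x\<in>UNIV. f ((x, k), u)) = (\<Sum>u\<in>UNIV. \<Sum>k\<in>I. \<Sum>x\<in>UNIV. f ((x, k), u))"
    by (simp add: sum.cartesian_product')
  also have "\<dots> = (\<Sum>k\<in>I. \<Sum>u\<in>UNIV. \<Sum>x\<in>UNIV. f ((x, k), u))"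
    by (rule sum.swap)
  also have "\<dots> = (\<Sum>k\<in>I. \<Sum>x\<in>UNIV. \<Sum>u\<in>UNIV. f ((x, k), u))"
    by (rule sum.cong [OF refl], rule sum.swap)
  also have "\<dots> = (\<Sum>x\<in>UNIV. \<Sum>k\<in>I. \<Sum>u\<in>UNIV. f ((x, k), u))"
    by (rule sum.swap)
  also have "\<dots> = sum f ((UNIV \<times> I) \<times> UNIV)"
    by (simp add: sum.cartesian_product')
  finally show ?thesis .
qed

lemma sum_marginal_state_action:
  "(\<Sum>(x', k)\<in>UNIV \<times> I. \<Sum>x\<in>UNIV. \<Sum>u\<in>UNIV. f (((x, k), u), x')) = sum f (((UNIV \<times> I) \<times> UNIV) \<times> UNIV)"
proof -
  have "(\<Sum>(x', k)\<in>UNIV \<times> I. \<Sum>x\<in>UNIV. \<Sum>u\<in>UNIV. f (((x, k), u), x'))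
      = (\<Sum>s\<in>UNIV \<times> I. \<Sum>x'\<in>UNIV. \<Sum>u\<in>UNIV. f ((s, u), x'))"
    using sum_marginal_state [where I = I and f = "\<lambda>(s, x'). \<Sum>u\<in>UNIV. f ((s, u), x')"]
    by (simp add: sum.cartesian_product')
  also have "\<dots> = (\<Sum>s\<in>UNIV \<times> I. \<Sum>u\<in>UNIV. \<Sum>x'\<in>UNIV. f ((s, u), x'))"
    by (rule sum.cong [OF refl], rule sum.swap)
  also have "\<dots> = sum f (((UNIV \<times> I) \<times> UNIV) \<times> UNIV)"
    by (simp add: sum.cartesian_product')
  finally show ?thesis .
qed

lemma is_dist_state_action:
  assumes "is_dist (UNIV \<times> I) mu" and "\<And>k x. k \<in> I \<Longrightarrow> is_dist UNIV (pol k x mu)"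
  shows "is_dist ((UNIV \<times> I) \<times> UNIV) (state_action mu pol)"
  unfolding state_action_def using assms by (intro is_dist_mixture) auto

lemma l1_state_action_le:
  assumes "is_dist (UNIV \<times> I) mu'" and "\<And>k x. k \<in> I \<Longrightarrow> is_dist UNIV (pol k x mu)"
    and "\<And>k x. k \<in> I \<Longrightarrow> l1 UNIV (pol k x mu) (pol k x mu') \<le> c"
  shows "l1 ((UNIV \<times> I) \<times> UNIV) (state_action mu pol) (state_action mu' pol) \<le> l1 (UNIV \<times> I) mu mu' + c"
  unfolding state_action_def using assms by (intro l1_mixture_le) auto

lemma is_dist_nu_MF:
  assumes sa: "is_dist ((UNIV \<times> I) \<times> UNIV) (state_action mu pol)"
  shows "is_dist (UNIV \<times> I) (nu_MF mu pol)"
proof -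
  have "sum (nu_MF mu pol) (UNIV \<times> I) = sum (state_action mu pol) ((UNIV \<times> I) \<times> UNIV)"
    by (simp add: sum_marginal_state [symmetric] nu_MF_eq_marginal)
  then show ?thesis
    using sa unfolding is_dist_def by (auto simp: nu_MF_eq_marginal intro: sum_nonneg)
qed

lemma l1_nu_MF_le_state_action:
  "l1 (UNIV \<times> I) (nu_MF mu pol) (nu_MF mu' pol)
    \<le> l1 ((UNIV \<times> I) \<times> UNIV) (state_action mu pol) (state_action mu' pol)"
proof -
  have "l1 (UNIV \<times> I) (nu_MF mu pol) (nu_MF mu' pol)
      = (\<Sum>(u, k)\<in>UNIV \<times> I. \<bar>\<Sum>x\<in>UNIV. state_action mu pol ((x, k), u) - state_action mu' pol ((x, k), u)\<bar>)"
    by (simp add: l1_def nu_MF_eq_marginal sum_subtractf case_prod_unfold)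
  also have "\<dots> \<le> (\<Sum>(u, k)\<in>UNIV \<times> I. \<Sum>x\<in>UNIV. \<bar>state_action mu pol ((x, k), u) - state_action mu' pol ((x, k), u)\<bar>)"
    by (intro sum_mono) (auto intro: sum_abs)
  also have "\<dots> = l1 ((UNIV \<times> I) \<times> UNIV) (state_action mu pol) (state_action mu' pol)"
    using sum_marginal_state [where f = "\<lambda>s. \<bar>state_action mu pol s - state_action mu' pol s\<bar>"]
    by (simp add: l1_def)
  finally show ?thesis .
qed

lemma l1_P_MF_le_joint:
  "l1 (UNIV \<times> I) (P_MF P mu pol) (P_MF P mu' pol)
    \<le> l1 (((UNIV \<times> I) \<times> UNIV) \<times> UNIV)
        (\<lambda>(s, x'). state_action mu pol s * transition_kernel P mu pol s x')
        (\<lambda>(s, x'). state_action mu' pol s * transition_kernel P mu' pol s x')"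
    (is "_ \<le> l1 _ ?J ?J'")
proof -
  have "l1 (UNIV \<times> I) (P_MF P mu pol) (P_MF P mu' pol)
      = (\<Sum>(x', k)\<in>UNIV \<times> I. \<bar>\<Sum>x\<in>UNIV. \<Sum>u\<in>UNIV. ?J (((x, k), u), x') - ?J' (((x, k), u), x')\<bar>)"
    by (simp add: l1_def P_MF_eq_marginal sum_subtractf case_prod_unfold)
  also have "\<dots> \<le> (\<Sum>(x', k)\<in>UNIV \<times> I. \<Sum>x\<in>UNIV. \<Sum>u\<in>UNIV. \<bar>?J (((x, k), u), x') - ?J' (((x, k), u), x')\<bar>)"
    by (intro sum_mono) (auto intro!: order_trans [OF sum_abs] sum_mono sum_abs)
  also have "\<dots> = l1 (((UNIV \<times> I) \<times> UNIV) \<times> UNIV) ?J ?J'"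
    using sum_marginal_state_action [where f = "\<lambda>t. \<bar>?J t - ?J' t\<bar>"] by (simp add: l1_def)
  finally show ?thesis .
qed

lemma l1_P_MF_le:
  assumes sa': "is_dist ((UNIV \<times> I) \<times> UNIV) (state_action mu' pol)"
    and P: "\<And>k x u. k \<in> I \<Longrightarrow> is_dist UNIV (P k x u mu (nu_MF mu pol))"
    and P_le: "\<And>k x u. k \<in> I \<Longrightarrow> l1 UNIV (P k x u mu (nu_MF mu pol)) (P k x u mu' (nu_MF mu' pol)) \<le> c"
  shows "l1 (UNIV \<times> I) (P_MF P mu pol) (P_MF P mu' pol)
    \<le> l1 ((UNIV \<times> I) \<times> UNIV) (state_action mu pol) (state_action mu' pol) + c"
proof -
  have T: "is_dist UNIV (transition_kernel P mu pol s)"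
    and T_le: "l1 UNIV (transition_kernel P mu pol s) (transition_kernel P mu' pol s) \<le> c"
    if "s \<in> (UNIV \<times> I) \<times> UNIV" for s
    using that P P_le by (auto simp: transition_kernel_def)
  show ?thesis
    using l1_P_MF_le_joint l1_mixture_le [OF sa' T T_le] by (rule order_trans)
qed

theorem lemma4:
  fixes K :: nat and L_P L_Q :: real
    and P :: "nat \<Rightarrow> 'x::finite \<Rightarrow> 'u::finite \<Rightarrow> ('x \<times> nat \<Rightarrow> real) \<Rightarrow> ('u \<times> nat \<Rightarrow> real) \<Rightarrow> 'x \<Rightarrow> real"
    and pol :: "nat \<Rightarrow> 'x \<Rightarrow> ('x \<times> nat \<Rightarrow> real) \<Rightarrow> 'u \<Rightarrow> real"
    and mu mu' :: "'x \<times> nat \<Rightarrow> real"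
  assumes K: "K \<ge> 1"
    and LP: "L_P > 0" and LQ: "L_Q > 0"
    and P_dist: "\<And>k x u m n. k \<in> idx K \<Longrightarrow> is_dist (UNIV \<times> idx K) m \<Longrightarrow>
        is_dist (UNIV \<times> idx K) n \<Longrightarrow> is_dist UNIV (P k x u m n)"
    and P_lip: "\<And>k x u m1 m2 n1 n2. k \<in> idx K \<Longrightarrow>
        is_dist (UNIV \<times> idx K) m1 \<Longrightarrow> is_dist (UNIV \<times> idx K) m2 \<Longrightarrow>
        is_dist (UNIV \<times> idx K) n1 \<Longrightarrow> is_dist (UNIV \<times> idx K) n2 \<Longrightarrow>
        l1 UNIV (P k x u m1 n1) (P k x u m2 n2)
          \<le> L_P * (l1 (UNIV \<times> idx K) m1 m2 + l1 (UNIV \<times> idx K) n1 n2)"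
    and pi_dist: "\<And>k x m. k \<in> idx K \<Longrightarrow> is_dist (UNIV \<times> idx K) m \<Longrightarrow>
        is_dist UNIV (pol k x m)"
    and pi_lip: "\<And>k x m1 m2. k \<in> idx K \<Longrightarrow>
        is_dist (UNIV \<times> idx K) m1 \<Longrightarrow> is_dist (UNIV \<times> idx K) m2 \<Longrightarrow>
        l1 UNIV (pol k x m1) (pol k x m2) \<le> L_Q * l1 (UNIV \<times> idx K) m1 m2"
    and mu: "is_dist (UNIV \<times> idx K) mu"
    and mu': "is_dist (UNIV \<times> idx K) mu'"
  shows "l1 (UNIV \<times> idx K) (P_MF P mu pol) (P_MF P mu' pol)
           \<le> ((1 + L_Q) + L_P * (2 + L_Q)) * l1 (UNIV \<times> idx K) mu mu'"
proof -
  let ?S = "UNIV \<times> idx K"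
  define d where "d = l1 ?S mu mu'"
  define d\<^sub>\<nu> where "d\<^sub>\<nu> = l1 ?S (nu_MF mu pol) (nu_MF mu' pol)"
  have sa: "is_dist (?S \<times> UNIV) (state_action m pol)" if "is_dist ?S m" for m
    using that pi_dist by (intro is_dist_state_action)
  have nu: "is_dist ?S (nu_MF m pol)" if "is_dist ?S m" for m
    using sa [OF that] by (rule is_dist_nu_MF)
  have sa_le: "l1 (?S \<times> UNIV) (state_action mu pol) (state_action mu' pol) \<le> d + L_Q * d"
    unfolding d_def using mu' pi_dist [OF _ mu] pi_lip [OF _ mu mu'] by (rule l1_state_action_le)
  have nu_le: "d\<^sub>\<nu> \<le> d + L_Q * d"
    unfolding d\<^sub>\<nu>_def using l1_nu_MF_le_state_action sa_le by (rule order_trans)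
  have "l1 ?S (P_MF P mu pol) (P_MF P mu' pol)
      \<le> l1 (?S \<times> UNIV) (state_action mu pol) (state_action mu' pol) + L_P * (d + d\<^sub>\<nu>)"
    using sa [OF mu'] P_dist [OF _ mu nu [OF mu]] P_lip [OF _ mu mu' nu [OF mu] nu [OF mu']]
    unfolding d_def d\<^sub>\<nu>_def by (rule l1_P_MF_le)
  also have "\<dots> \<le> (d + L_Q * d) + L_P * (d + (d + L_Q * d))"
    using sa_le nu_le LP by (intro add_mono mult_left_mono) auto
  finally show ?thesis
    by (simp add: d_def algebra_simps)
qed

end
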